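(* Let $R>0$ and let $f\colon\mathbb{R}\to(0,\infty)$ be a twice continuously differentiable convex function with $t^2+f(t)^2>R^2$ for all $t$. Let $\alpha(t)=\dfrac{tf'(t)-f(t)}{\sqrt{1+f'(t)^2}}$ and $D=\{t\in\mathbb{R}\mid\alpha(t)<R\}$. Then the function $x\colon D\to\mathbb{R}$, $$x(t)=t+\frac{f'(t)}{2\sqrt{1+f'(t)^2}}\cdot\frac{t^2+f(t)^2-R^2}{R-\alpha(t)},$$ is a bijection from $D$ onto $\mathbb{R}$ and $x'(t)\ne0$ for all $t\in D$.
   Context: Geometrically, with $K$ the closed disk of radius $R$ centered at the origin and $L$ the epigraph of $f$, $(x(t),y(t))$ with $y(t)=f(t)-\frac{1}{2\sqrt{1+f'(t)^2}}\cdot\frac{t^2+f(t)^2-R^2}{R-\alpha(t)}$ is the point equidistant from $K$ and $L$ whose nearest point in $L$ is $(t,f(t))$. *)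

theory Defs
  imports "HOL-Analysis.Analysis"
begin

definition alpha_fn :: "(real \<Rightarrow> real) \<Rightarrow> real \<Rightarrow> real" where
  "alpha_fn f t = (t * deriv f t - f t) / sqrt (1 + (deriv f t)\<^sup>2)"

definition x_fn :: "real \<Rightarrow> (real \<Rightarrow> real) \<Rightarrow> real \<Rightarrow> real" where
  "x_fn R f t = t + deriv f t / (2 * sqrt (1 + (deriv f t)\<^sup>2))
                 * ((t\<^sup>2 + (f t)\<^sup>2 - R\<^sup>2) / (R - alpha_fn f t))"

end

theory Submission
  imports Defs
begin

(*
  Write s = sqrt (1 + f'^2), N = t^2 + f^2 - R^2 > 0 and w = t + f f'.  Then
  alpha' = f'' w / s^3, and w is nondecreasing, so alpha is first nonincreasing and then
  nondecreasing: D = {alpha < R} is an open interval containing 0.  On D,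
    x' = (1 + N f'' / (2 (R - alpha) s^3)) (R + f s) / (R - alpha) > 0,
  so x is strictly increasing and continuous.  It is unbounded above on D: if D has a right
  end point b, then alpha b = R and f' b > 0, so x blows up at b; if D contains [0, oo), either
  f' becomes nonnegative and x t >= t, or f is decreasing and x t > t - N / (2 t) -> oo.
  Reflecting t to -t gives unboundedness below, and the intermediate value theorem finishes.
*)

lemma convex_on_imp_mono_on_deriv:
  fixes f f' :: "real \<Rightarrow> real"
  assumes convex: "convex_on A f" and "connected A"
    and deriv: "\<And>x. x \<in> interior A \<Longrightarrow> (f has_real_derivative f' x) (at x)"
  shows "mono_on (interior A) f'"
proof (rule mono_onI)
  fix a b assume ab: "a \<in> interior A" "b \<in> interior A" "a \<le> b"
  have "f' a * (b - a) \<le> f b - f a" "f' b * (a - b) \<le> f a - f b"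
    using ab interior_subset
    by (auto intro!: convex_on_imp_above_tangent[OF convex \<open>connected A\<close>]
                     has_field_derivative_at_within deriv)
  then have "0 \<le> (f' b - f' a) * (b - a)"
    by (simp add: algebra_simps)
  then show "f' a \<le> f' b"
    using ab(3) by (cases "a = b") (auto simp: zero_le_mult_iff)
qed

lemma is_interval_sublevel_if_deriv_sign_mono:
  fixes g g' w :: "real \<Rightarrow> real"
  assumes deriv: "\<And>x. (g has_real_derivative g' x) (at x)" and "mono w"
    and nonpos: "\<And>x. w x \<le> 0 \<Longrightarrow> g' x \<le> 0"
    and nonneg: "\<And>x. w x \<ge> 0 \<Longrightarrow> g' x \<ge> 0"
  shows "is_interval {x. g x < c}"
proof -
  have le_max: "g x \<le> max (g a) (g b)" if "a \<le> x" "x \<le> b" for a b x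
  proof (cases "w x \<ge> 0")
    case True
    have "g x \<le> g b"
    proof (rule DERIV_nonneg_imp_nondecreasing[OF \<open>x \<le> b\<close>])
      fix y assume "x \<le> y" "y \<le> b"
      then have "w y \<ge> 0"
        using True monoD[OF \<open>mono w\<close>, of x y] by linarith
      then show "\<exists>d. DERIV g y :> d \<and> d \<ge> 0"
        using deriv nonneg by blast
    qed
    then show ?thesis by simp
  next
    case False
    have "g a \<ge> g x"
    proof (rule DERIV_nonpos_imp_nonincreasing[OF \<open>a \<le> x\<close>])
      fix y assume "a \<le> y" "y \<le> x"
      then have "w y \<le> 0"
        using False monoD[OF \<open>mono w\<close>, of y x] by linarith
      then show "\<exists>d. DERIV g y :> d \<and> d \<le> 0"
        using deriv nonpos by blast
    qed
    then show ?thesis by simp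
  qed
  show ?thesis
    unfolding is_interval_1
  proof (intro ballI allI impI)
    fix a b x assume "a \<in> {x. g x < c}" "b \<in> {x. g x < c}" "a \<le> x \<and> x \<le> b"
    then show "x \<in> {x. g x < c}"
      using le_max[of a x b] by simp
  qed
qed

lemma bij_betw_UNIV_if_strict_mono_on_unbounded:
  fixes g :: "real \<Rightarrow> real"
  assumes "is_interval D" "continuous_on D g" "strict_mono_on D g"
    and above: "\<And>y. \<exists>t\<in>D. y \<le> g t" and below: "\<And>y. \<exists>t\<in>D. g t \<le> y"
  shows "bij_betw g D UNIV"
proof -
  have "y \<in> g ` D" for y
  proof -
    obtain a where a: "a \<in> D" "g a \<le> y"
      using below by blast
    obtain b where b: "b \<in> D" "y \<le> g b"
      using above by blast
    have "a \<le> b"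
    proof (rule ccontr)
      assume "\<not> a \<le> b"
      then have "g b < g a"
        using strict_mono_onD[OF \<open>strict_mono_on D g\<close> \<open>b \<in> D\<close> \<open>a \<in> D\<close>] by simp
      with a b show False by simp
    qed
    have "{a..b} \<subseteq> D"
      using mem_is_interval_1_I[OF \<open>is_interval D\<close> \<open>a \<in> D\<close> \<open>b \<in> D\<close>] by auto
    then have "continuous_on {a..b} g"
      using \<open>continuous_on D g\<close> continuous_on_subset by blast
    then obtain t where "t \<in> {a..b}" "g t = y"
      using IVT'[of g a y b] a b \<open>a \<le> b\<close> by auto
    then show ?thesis
      using \<open>{a..b} \<subseteq> D\<close> by blast
  qed
  then show ?thesis
    using strict_mono_on_imp_inj_on[OF \<open>strict_mono_on D g\<close>]
    unfolding bij_betw_def by blast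
qed

lemma open_interval_right_endpoint:
  fixes D :: "real set"
  assumes "is_interval D" "open D" "a \<in> D" "c \<notin> D" "a \<le> c"
  obtains b where "a < b" "b \<notin> D" "b \<in> closure D" "{a..<b} \<subseteq> D"
proof
  have bound: "\<forall>d\<in>D. d < c"
  proof
    fix d assume "d \<in> D"
    show "d < c"
    proof (rule ccontr)
      assume "\<not> d < c"
      then have "c \<in> D"
        using mem_is_interval_1_I[OF \<open>is_interval D\<close> \<open>a \<in> D\<close> \<open>d \<in> D\<close>] \<open>a \<le> c\<close> by simp
      with \<open>c \<notin> D\<close> show False by simp
    qed
  qed
  have ne_bdd: "D \<noteq> {}" "bdd_above D"
    using \<open>a \<in> D\<close> bound by (auto intro!: bdd_aboveI[of D c] less_imp_le)
  show "Sup D \<notin> D"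
    using Sup_notin_open[OF \<open>open D\<close> bound] .
  show "Sup D \<in> closure D"
    using closure_contains_Sup[OF ne_bdd] .
  show "a < Sup D"
    using cSup_upper[OF \<open>a \<in> D\<close> ne_bdd(2)] \<open>a \<in> D\<close> \<open>Sup D \<notin> D\<close>
    by (cases "a = Sup D") auto
  show "{a..<Sup D} \<subseteq> D"
  proof
    fix t assume "t \<in> {a..<Sup D}"
    then obtain d where "d \<in> D" "t < d" "a \<le> t"
      using less_cSup_iff[OF ne_bdd] by auto
    then show "t \<in> D"
      using mem_is_interval_1_I[OF \<open>is_interval D\<close> \<open>a \<in> D\<close> \<open>d \<in> D\<close>] by simp
  qed
qed

locale convex_graph_outside_disk =
  fixes R :: real and f f' f'' :: "real \<Rightarrow> real"
  assumes R_pos: "R > 0"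
    and f_pos: "\<And>t. f t > 0"
    and f_deriv: "\<And>t. (f has_real_derivative f' t) (at t)"
    and f'_deriv: "\<And>t. (f' has_real_derivative f'' t) (at t)"
    and f''_nonneg: "\<And>t. f'' t \<ge> 0"
    and outside_disk: "\<And>t. t\<^sup>2 + (f t)\<^sup>2 > R\<^sup>2"
begin

definition sec_slope :: "real \<Rightarrow> real" where
  "sec_slope t = sqrt (1 + (f' t)\<^sup>2)"

definition alpha :: "real \<Rightarrow> real" where
  "alpha t = (t * f' t - f t) / sec_slope t"

definition circle_power :: "real \<Rightarrow> real" where
  "circle_power t = t\<^sup>2 + (f t)\<^sup>2 - R\<^sup>2"

definition x :: "real \<Rightarrow> real" where
  "x t = t + f' t / (2 * sec_slope t) * (circle_power t / (R - alpha t))"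

definition D :: "real set" where
  "D = {t. alpha t < R}"

definition tangent_inner :: "real \<Rightarrow> real" where
  "tangent_inner t = t + f t * f' t"

definition x' :: "real \<Rightarrow> real" where
  "x' t = (1 + circle_power t * f'' t / (2 * (R - alpha t) * (sec_slope t)^3))
          * (R + f t * sec_slope t) / (R - alpha t)"

lemma sec_slope_pos: "sec_slope t > 0"
  unfolding sec_slope_def by (simp add: add_pos_nonneg)

lemma sec_slope_squared: "(sec_slope t)\<^sup>2 = 1 + (f' t)\<^sup>2"
  unfolding sec_slope_def by simp

lemma circle_power_pos: "circle_power t > 0"
  using outside_disk[of t] unfolding circle_power_def by simp

lemma f'_mono: "mono f'"
proof (rule monoI)
  fix a b :: real assume "a \<le> b"
  show "f' a \<le> f' b"
    by (rule deriv_nonneg_imp_mono[OF f'_deriv f''_nonneg \<open>a \<le> b\<close>])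
qed

lemma has_real_derivative_sec_slope:
  "(sec_slope has_real_derivative f' t * f'' t / sec_slope t) (at t)"
proof -
  have "((\<lambda>t. sqrt (1 + (f' t)\<^sup>2)) has_real_derivative
      inverse (sqrt (1 + (f' t)\<^sup>2)) / 2 * (2 * f' t * f'' t)) (at t)"
    by (rule DERIV_chain2[OF DERIV_real_sqrt])
       (auto intro!: derivative_eq_intros f'_deriv simp: add_pos_nonneg)
  then show ?thesis
    unfolding sec_slope_def[abs_def] by (simp add: field_simps)
qed

lemma has_real_derivative_alpha:
  "(alpha has_real_derivative f'' t * tangent_inner t / (sec_slope t)^3) (at t)"
proof -
  have "((\<lambda>t. t * f' t - f t) has_real_derivative t * f'' t) (at t)"
    by (auto intro!: derivative_eq_intros f_deriv f'_deriv)
  then have "(alpha has_real_derivative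
      (t * f'' t * sec_slope t - (t * f' t - f t) * (f' t * f'' t / sec_slope t))
        / (sec_slope t * sec_slope t)) (at t)"
    unfolding alpha_def[abs_def]
    by (rule DERIV_divide[OF _ has_real_derivative_sec_slope]) (simp add: sec_slope_pos less_imp_neq[symmetric])
  moreover have "(t * f'' t * sec_slope t - (t * f' t - f t) * (f' t * f'' t / sec_slope t))
        / (sec_slope t * sec_slope t) = f'' t * tangent_inner t / (sec_slope t)^3"
    using sec_slope_pos[of t] sec_slope_squared[of t] unfolding tangent_inner_def
    by (simp add: field_simps power2_eq_square power3_eq_cube)
  ultimately show ?thesis by simp
qed

lemma has_real_derivative_circle_power:
  "(circle_power has_real_derivative 2 * tangent_inner t) (at t)"
  unfolding circle_power_def[abs_def] tangent_inner_def
  by (auto intro!: derivative_eq_intros f_deriv simp: algebra_simps)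

lemma tangent_inner_mono: "mono tangent_inner"
proof (rule monoI)
  fix a b :: real assume "a \<le> b"
  have deriv: "(tangent_inner has_real_derivative 1 + (f' t)\<^sup>2 + f t * f'' t) (at t)" for t
    unfolding tangent_inner_def[abs_def]
    by (auto intro!: derivative_eq_intros f_deriv f'_deriv simp: algebra_simps power2_eq_square)
  have nonneg: "0 \<le> 1 + (f' t)\<^sup>2 + f t * f'' t" for t
    using f_pos[of t] f''_nonneg[of t] by (simp add: add_nonneg_nonneg)
  show "tangent_inner a \<le> tangent_inner b"
    by (rule deriv_nonneg_imp_mono[OF deriv nonneg \<open>a \<le> b\<close>])
qed

lemma is_interval_D: "is_interval D"
  unfolding D_def
proof (rule is_interval_sublevel_if_deriv_sign_mono[OF has_real_derivative_alpha tangent_inner_mono])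
  fix t
  show "tangent_inner t \<le> 0 \<Longrightarrow> f'' t * tangent_inner t / (sec_slope t)^3 \<le> 0"
    using f''_nonneg[of t] sec_slope_pos[of t] by (simp add: divide_nonpos_pos mult_nonneg_nonpos)
  show "tangent_inner t \<ge> 0 \<Longrightarrow> f'' t * tangent_inner t / (sec_slope t)^3 \<ge> 0"
    using f''_nonneg[of t] sec_slope_pos[of t] by simp
qed

lemma continuous_alpha: "continuous_on A alpha"
  using has_real_derivative_alpha
  by (intro continuous_at_imp_continuous_on ballI DERIV_isCont) blast

lemma open_D: "open D"
  unfolding D_def by (intro open_Collect_less continuous_alpha continuous_on_const)

lemma zero_in_D: "0 \<in> D"
proof -
  have "f 0 / sec_slope 0 > 0"
    using f_pos sec_slope_pos by simp
  then show ?thesis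
    using R_pos unfolding D_def alpha_def by simp
qed

lemma R_plus_f_sec_slope:
  "R + f t * sec_slope t = (R - alpha t) + tangent_inner t * f' t / sec_slope t"
proof -
  have "alpha t + f t * sec_slope t = (t * f' t - f t + f t * (sec_slope t)\<^sup>2) / sec_slope t"
    using sec_slope_pos[of t] unfolding alpha_def by (simp add: field_simps power2_eq_square)
  also have "\<dots> = tangent_inner t * f' t / sec_slope t"
    unfolding sec_slope_squared tangent_inner_def by (simp add: algebra_simps power2_eq_square)
  finally show ?thesis by simp
qed

lemma has_real_derivative_half_sin_slope:
  "((\<lambda>t. f' t / (2 * sec_slope t)) has_real_derivative f'' t / (2 * (sec_slope t)^3)) (at t)"
proof -
  have "((\<lambda>t. f' t / (2 * sec_slope t)) has_real_derivative
      (f'' t * (2 * sec_slope t) - f' t * (2 * (f' t * f'' t / sec_slope t)))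
        / ((2 * sec_slope t) * (2 * sec_slope t))) (at t)"
    by (rule DERIV_divide[OF f'_deriv DERIV_cmult[OF has_real_derivative_sec_slope]])
       (use sec_slope_pos[of t] in simp)
  moreover have "(f'' t * (2 * sec_slope t) - f' t * (2 * (f' t * f'' t / sec_slope t)))
        / ((2 * sec_slope t) * (2 * sec_slope t)) = f'' t / (2 * (sec_slope t)^3)"
  proof -
    have "f'' t * (2 * sec_slope t) - f' t * (2 * (f' t * f'' t / sec_slope t))
        = 2 * f'' t * ((sec_slope t)\<^sup>2 - (f' t)\<^sup>2) / sec_slope t"
      using sec_slope_pos[of t] by (simp add: field_simps power2_eq_square)
    also have "\<dots> = 2 * f'' t / sec_slope t"
      by (simp add: sec_slope_squared)
    finally show ?thesis
      using sec_slope_pos[of t] by (simp add: field_simps power3_eq_cube)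
  qed
  ultimately show ?thesis by simp
qed

lemma has_real_derivative_x:
  assumes "t \<in> D"
  shows "(x has_real_derivative x' t) (at t)"
proof -
  define g s u k N w
    where "g = R - alpha t" and "s = sec_slope t" and "u = f' t" and "k = f'' t"
      and "N = circle_power t" and "w = tangent_inner t"
  have "g > 0" "s > 0"
    using assms sec_slope_pos unfolding D_def g_def s_def by simp_all
  have "((\<lambda>t. circle_power t / (R - alpha t)) has_real_derivative
      (2 * w * g - N * (0 - k * w / s^3)) / (g * g)) (at t)"
    unfolding g_def s_def k_def N_def w_def
    by (rule DERIV_divide[OF has_real_derivative_circle_power
          DERIV_diff[OF DERIV_const has_real_derivative_alpha]]) (use \<open>g > 0\<close> g_def in simp)
  then have "(x has_real_derivative
      1 + (k / (2 * s^3) * (N / g) + (2 * w * g - N * (0 - k * w / s^3)) / (g * g) * (u / (2 * s)))) (at t)"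
    unfolding x_def[abs_def] g_def s_def u_def k_def N_def
    by (rule DERIV_add[OF DERIV_ident DERIV_mult[OF has_real_derivative_half_sin_slope]])
  moreover have "1 + (k / (2 * s^3) * (N / g) + (2 * w * g - N * (0 - k * w / s^3)) / (g * g) * (u / (2 * s)))
      = (1 + N * k / (2 * g * s^3)) * (1 + w * u / (s * g))"
    using \<open>g > 0\<close> \<open>s > 0\<close> by (simp add: field_simps)
  moreover have "1 + w * u / (s * g) = (R + f t * s) / g"
  proof -
    have "R + f t * s = g + w * u / s"
      using R_plus_f_sec_slope[of t] unfolding g_def s_def u_def w_def .
    then show ?thesis
      using \<open>g > 0\<close> \<open>s > 0\<close> by (simp add: field_simps)
  qed
  ultimately show ?thesis
    unfolding x'_def g_def s_def k_def N_def by (simp add: mult.commute)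
qed

lemma x'_pos:
  assumes "t \<in> D"
  shows "x' t > 0"
proof -
  have "R - alpha t > 0"
    using assms unfolding D_def by simp
  moreover have "circle_power t * f'' t / (2 * (R - alpha t) * (sec_slope t)^3) \<ge> 0"
    using circle_power_pos[of t] f''_nonneg[of t] sec_slope_pos[of t] calculation by simp
  moreover have "R + f t * sec_slope t > 0"
    using R_pos f_pos[of t] sec_slope_pos[of t] by (simp add: add_pos_pos)
  ultimately show ?thesis
    unfolding x'_def by simp
qed

lemma strict_mono_on_x: "strict_mono_on D x"
proof (rule strict_mono_onI)
  fix a b assume "a \<in> D" "b \<in> D" "a < b"
  show "x a < x b"
  proof (rule DERIV_pos_imp_increasing[OF \<open>a < b\<close>])
    fix t assume "a \<le> t" "t \<le> b"
    then have "t \<in> D"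
      using mem_is_interval_1_I[OF is_interval_D \<open>a \<in> D\<close> \<open>b \<in> D\<close>] by simp
    then show "\<exists>y. DERIV x t :> y \<and> y > 0"
      using has_real_derivative_x x'_pos by blast
  qed
qed

lemma continuous_on_x: "continuous_on D x"
  using has_real_derivative_x by (intro continuous_at_imp_continuous_on ballI) (blast intro: DERIV_isCont)

lemma x_ge_self:
  assumes "t \<in> D" "f' t \<ge> 0"
  shows "t \<le> x t"
proof -
  have "f' t / (2 * sec_slope t) * (circle_power t / (R - alpha t)) \<ge> 0"
    using assms circle_power_pos[of t] sec_slope_pos[of t] unfolding D_def by simp
  then show ?thesis
    unfolding x_def by simp
qed

lemma x_gt_sub_circle_power:
  assumes "t \<in> D" "t > 0"
  shows "t - circle_power t / (2 * t) < x t"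
proof -
  have "R - alpha t > 0"
    using assms(1) unfolding D_def by simp
  have "sec_slope t * (R - alpha t) = R * sec_slope t - t * f' t + f t"
    unfolding alpha_def using sec_slope_pos[of t] by (simp add: field_simps)
  then have "t * f' t + sec_slope t * (R - alpha t) > 0"
    using R_pos f_pos[of t] sec_slope_pos[of t] by (simp add: add_pos_pos)
  then have "circle_power t * (t * f' t + sec_slope t * (R - alpha t))
      / (2 * t * (sec_slope t * (R - alpha t))) > 0"
    using circle_power_pos[of t] sec_slope_pos[of t] \<open>R - alpha t > 0\<close> \<open>t > 0\<close> by simp
  also have "circle_power t * (t * f' t + sec_slope t * (R - alpha t))
      / (2 * t * (sec_slope t * (R - alpha t))) = x t - (t - circle_power t / (2 * t))"
    unfolding x_def using sec_slope_pos[of t] \<open>R - alpha t > 0\<close> \<open>t > 0\<close>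
    by (simp add: field_simps)
  finally show ?thesis by simp
qed

lemma x_unbounded_above_if_ray_in_D:
  assumes "{0..} \<subseteq> D"
  shows "\<exists>t\<in>D. y \<le> x t"
proof (cases "\<exists>c. f' c \<ge> 0")
  case True
  then obtain c where "f' c \<ge> 0" by blast
  define t where "t = max (max c y) 0"
  have "t \<in> D"
    using assms by (auto simp: t_def)
  moreover have "f' t \<ge> 0"
    using monoD[OF f'_mono, of c t] \<open>f' c \<ge> 0\<close> unfolding t_def by linarith
  ultimately show ?thesis
    using x_ge_self[of t] by (intro bexI[of _ t]) (auto simp: t_def)
next
  case False
  have f_le: "f t \<le> f 0" if "t \<ge> 0" for t
    using False f_deriv
    by (intro DERIV_nonpos_imp_nonincreasing[OF that]) (meson linorder_not_le less_imp_le)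
  define t where "t = 2 * \<bar>y\<bar> + f 0 + 1"
  have "t > 0" "f 0 \<le> t" "t \<in> D"
    using f_pos[of 0] assms by (auto simp: t_def)
  have "f t \<le> f 0" "f t > 0"
    using f_le \<open>t > 0\<close> f_pos by auto
  then have "(f t)\<^sup>2 \<le> t * f 0"
    using \<open>f 0 \<le> t\<close> mult_mono[of "f t" "f 0" "f t" t] by (simp add: power2_eq_square mult.commute)
  then have "circle_power t \<le> t * (t + f 0)"
    unfolding circle_power_def by (simp add: algebra_simps power2_eq_square add_increasing)
  then have "circle_power t / (2 * t) \<le> (t + f 0) / 2"
    using \<open>t > 0\<close> by (simp add: divide_simps mult.commute)
  moreover have "t - (t + f 0) / 2 = \<bar>y\<bar> + 1 / 2"
    unfolding t_def by (simp add: field_simps)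
  ultimately have "y < x t"
    using x_gt_sub_circle_power[OF \<open>t \<in> D\<close> \<open>t > 0\<close>] abs_ge_self[of y] by linarith
  with \<open>t \<in> D\<close> show ?thesis by force
qed

lemma x_tendsto_at_top_at_left:
  assumes "b > 0" "alpha b = R" and in_D: "\<forall>\<^sub>F t in at_left b. t \<in> D"
  shows "filterlim x at_top (at_left b)"
proof -
  have "b * f' b = R * sec_slope b + f b"
    using assms(2) sec_slope_pos[of b] unfolding alpha_def by (simp add: field_simps)
  then have "b * f' b > 0"
    using R_pos f_pos[of b] sec_slope_pos[of b] by (simp add: add_pos_pos)
  then have "f' b > 0"
    using \<open>b > 0\<close> by (simp add: zero_less_mult_iff)
  have at_left_le: "at_left b \<le> at b"
    by (rule at_le) simp
  have "isCont (\<lambda>t. f' t / (2 * sec_slope t) * circle_power t) b"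
    using sec_slope_pos[of b] f'_deriv has_real_derivative_sec_slope has_real_derivative_circle_power
    by (intro continuous_intros) (auto intro: DERIV_isCont)
  then have num: "((\<lambda>t. f' t / (2 * sec_slope t) * circle_power t)
      \<longlongrightarrow> f' b / (2 * sec_slope b) * circle_power b) (at_left b)"
    unfolding isCont_def by (rule tendsto_mono[OF at_left_le])
  have "isCont (\<lambda>t. R - alpha t) b"
    using has_real_derivative_alpha by (intro continuous_intros) (auto intro: DERIV_isCont)
  then have den: "((\<lambda>t. R - alpha t) \<longlongrightarrow> 0) (at_left b)"
    unfolding isCont_def using assms(2) by (metis diff_self tendsto_mono[OF at_left_le])
  have pos: "\<forall>\<^sub>F t in at_left b. 0 < R - alpha t"
    using in_D by eventually_elim (simp add: D_def)
  have "filterlim (\<lambda>t. f' t / (2 * sec_slope t) * circle_power t / (R - alpha t))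
      at_top (at_left b)"
    by (rule LIM_at_top_divide[OF num _ den pos])
       (use \<open>f' b > 0\<close> sec_slope_pos[of b] circle_power_pos[of b] in simp)
  then show ?thesis
    unfolding x_def[abs_def] times_divide_eq_right
    by (rule filterlim_tendsto_add_at_top[OF tendsto_ident_at])
qed

lemma x_unbounded_above: "\<exists>t\<in>D. y \<le> x t"
proof (cases "{0..} \<subseteq> D")
  case True
  then show ?thesis
    by (rule x_unbounded_above_if_ray_in_D)
next
  case False
  then obtain c where "c \<ge> 0" "c \<notin> D" by auto
  then obtain b where b: "0 < b" "b \<notin> D" "b \<in> closure D" "{0..<b} \<subseteq> D"
    using open_interval_right_endpoint[OF is_interval_D open_D zero_in_D] by blast
  have "alpha b \<le> R"
    by (rule continuous_le_on_closure[OF continuous_alpha b(3)]) (simp add: D_def)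
  with b(2) have "alpha b = R"
    by (simp add: D_def)
  have in_D: "\<forall>\<^sub>F t in at_left b. t \<in> D"
    using eventually_at_left_real[OF b(1)] by eventually_elim (use b(4) in auto)
  have "\<forall>\<^sub>F t in at_left b. y \<le> x t"
    using x_tendsto_at_top_at_left[OF b(1) \<open>alpha b = R\<close> in_D] unfolding filterlim_at_top by blast
  with in_D have "\<forall>\<^sub>F t in at_left b. t \<in> D \<and> y \<le> x t"
    by eventually_elim simp
  then show ?thesis
    using eventually_happens'[of "at_left b"] by auto
qed

lemma mirror: "convex_graph_outside_disk R (\<lambda>t. f (-t)) (\<lambda>t. - f' (-t)) (\<lambda>t. f'' (-t))"
proof
  fix t
  show "((\<lambda>t. f (-t)) has_real_derivative - f' (-t)) (at t)"
    using DERIV_mirror[of f "f' (-t)" t] f_deriv[of "-t"] by simp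
  have "((\<lambda>t. f' (-t)) has_real_derivative - f'' (-t)) (at t)"
    using DERIV_mirror[of f' "f'' (-t)" t] f'_deriv[of "-t"] by simp
  then show "((\<lambda>t. - f' (-t)) has_real_derivative f'' (-t)) (at t)"
    using DERIV_minus by fastforce
  show "t\<^sup>2 + (f (-t))\<^sup>2 > R\<^sup>2"
    using outside_disk[of "-t"] by simp
qed (use R_pos f_pos f''_nonneg in auto)

lemma x_unbounded_below: "\<exists>t\<in>D. x t \<le> y"
proof -
  interpret mirrored: convex_graph_outside_disk R "\<lambda>t. f (-t)" "\<lambda>t. - f' (-t)" "\<lambda>t. f'' (-t)"
    by (rule mirror)
  have sec_slope: "mirrored.sec_slope t = sec_slope (-t)" for t
    by (simp add: mirrored.sec_slope_def sec_slope_def)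
  have alpha: "mirrored.alpha t = alpha (-t)" for t
    by (simp add: mirrored.alpha_def alpha_def sec_slope)
  have x: "mirrored.x t = - x (-t)" for t
    by (simp add: mirrored.x_def x_def mirrored.circle_power_def circle_power_def sec_slope alpha)
  obtain t where "t \<in> mirrored.D" "- y \<le> mirrored.x t"
    using mirrored.x_unbounded_above by blast
  then show ?thesis
    by (intro bexI[of _ "-t"]) (auto simp: x alpha mirrored.D_def D_def)
qed

lemma bij_betw_x: "bij_betw x D UNIV"
  by (rule bij_betw_UNIV_if_strict_mono_on_unbounded[OF is_interval_D continuous_on_x strict_mono_on_x
        x_unbounded_above x_unbounded_below])

end

theorem theorem7:
  fixes R :: real and f :: "real \<Rightarrow> real"
  assumes "R > 0"
    and "\<And>t. f t > 0"
    and "f differentiable_on UNIV"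
    and "deriv f differentiable_on UNIV"
    and "continuous_on UNIV (deriv (deriv f))"
    and "convex_on UNIV f"
    and "\<And>t. t\<^sup>2 + (f t)\<^sup>2 > R\<^sup>2"
  shows "bij_betw (x_fn R f) {t. alpha_fn f t < R} UNIV
         \<and> (\<forall>t \<in> {t. alpha_fn f t < R}.
              x_fn R f differentiable (at t) \<and> deriv (x_fn R f) t \<noteq> 0)"
proof -
  have f_deriv: "(f has_real_derivative deriv f t) (at t)" for t
    using assms(3) DERIV_deriv_iff_real_differentiable differentiable_on_def by blast
  have f'_deriv: "(deriv f has_real_derivative deriv (deriv f) t) (at t)" for t
    using assms(4) DERIV_deriv_iff_real_differentiable differentiable_on_def by blast
  have "mono_on UNIV (deriv f)"
    using convex_on_imp_mono_on_deriv[OF assms(6) connected_UNIV] f_deriv by simp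
  then have "deriv (deriv f) t \<ge> 0" for t
    using mono_on_imp_deriv_nonneg[OF _ f'_deriv] by simp
  then interpret convex_graph_outside_disk R f "deriv f" "deriv (deriv f)"
    using assms f_deriv f'_deriv by unfold_locales auto
  have "alpha_fn f = alpha" "x_fn R f = x"
    by (simp_all add: fun_eq_iff alpha_fn_def alpha_def x_fn_def x_def sec_slope_def circle_power_def)
  moreover have "x differentiable (at t) \<and> deriv x t \<noteq> 0" if "t \<in> D" for t
    using has_real_derivative_x[OF that] x'_pos[OF that]
    by (auto simp: real_differentiable_def DERIV_imp_deriv)
  ultimately show ?thesis
    using bij_betw_x unfolding D_def by simp
qed

end
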